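(* Let $G$ be a closed and continuous cyclic graph with vertex set $V$ and $\mathrm{wf}(G)=\frac pq$. Then for all $v\in V$ and $i,j\ge0$: (i) $f_i(v)\in V$; (ii) $\gamma_{i+j}(v)=\gamma_i(v)+\gamma_j(f_i(v))$; (iii) $f_{i+j}(v)=f_j(f_i(v))$.
   Context: $S^1=\mathbb{R}/\mathbb{Z}$ (points identified with $[0,1)$); $\preceq$/$\prec$ clockwise order; $\vec d(p,q)\in[0,1)$ clockwise distance. A directed graph has no loops and no pair of opposite edges; $N^+[G,v]=\{v\}\cup\{w:v\to w\}$. A directed graph with vertex set $V\subseteq S^1$ is cyclic if whenever $v\to u$ is an edge, $v\to w$ and $w\to u$ are edges for all $w\in V$ with $v\prec w\prec u\prec v$. Winding fraction: for finite cyclic $G$, $\mathrm{wf}(G)=\sup\{k/n:\exists$ cyclic homomorphism $C_n^k\to G\}$ ($C_n^k$: vertices $0..n-1$, edges $i\to i+s\bmod n$, $1\le s\le k<n/2$); in general, the supremum over finite induced subgraphs. For $m\ge1$, $\gamma_m(v_0)=\sup\{\sum_{i=0}^{m-1}\vec d(v_i,v_{i+1}): v_{i+1}\in N^+[G,v_i]\}$, $\gamma_0=0$, and $f_m(v)=(v+\gamma_m(v))\bmod 1\in S^1$. $G$ is closed if $V$ is closed in $S^1$, and continuous if every $\gamma_m:V\to\mathbb{R}$ is continuous. *)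

theory Defs
  imports "HOL-Analysis.Analysis"
begin

text \<open>Points of S^1 = R/Z are represented by their representatives in [0,1).
  A directed graph is a vertex set V (subset of [0,1)) with an edge predicate E.\<close>

definition cdist :: "real \<Rightarrow> real \<Rightarrow> real" where
  "cdist p q = frac (q - p)"

definition cbetween :: "real \<Rightarrow> real \<Rightarrow> real \<Rightarrow> bool" where
  "cbetween v w u \<longleftrightarrow> 0 < cdist v w \<and> cdist v w < cdist v u"

definition digraph :: "real set \<Rightarrow> (real \<Rightarrow> real \<Rightarrow> bool) \<Rightarrow> bool" where
  "digraph V E \<longleftrightarrow> V \<subseteq> {0..<1} \<and>
     (\<forall>u v. E u v \<longrightarrow> u \<in> V \<and> v \<in> V \<and> u \<noteq> v \<and> \<not> E v u)"

definition cyclic_graph :: "real set \<Rightarrow> (real \<Rightarrow> real \<Rightarrow> bool) \<Rightarrow> bool" where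
  "cyclic_graph V E \<longleftrightarrow> digraph V E \<and>
     (\<forall>v\<in>V. \<forall>u\<in>V. \<forall>w\<in>V. E v u \<and> cbetween v w u \<longrightarrow> E v w \<and> E w u)"

definition out_nbhd :: "(real \<Rightarrow> real \<Rightarrow> bool) \<Rightarrow> real \<Rightarrow> real set" where
  "out_nbhd E v = {v} \<union> {w. E v w}"

text \<open>Cyclic homomorphism C_n^k \<rightarrow> (W, E restricted to W): a graph homomorphism
  whose image points h 0, ..., h (n-1) go once around the circle in clockwise order.\<close>
definition cyclic_hom :: "nat \<Rightarrow> nat \<Rightarrow> real set \<Rightarrow> (real \<Rightarrow> real \<Rightarrow> bool) \<Rightarrow> (nat \<Rightarrow> real) \<Rightarrow> bool" where
  "cyclic_hom n k W E h \<longleftrightarrow> 1 \<le> k \<and> 2 * k < n \<and>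
     (\<forall>i<n. h i \<in> W) \<and>
     (\<forall>i<n. \<forall>s\<in>{1..k}. E (h i) (h ((i + s) mod n))) \<and>
     (\<Sum>i<n. cdist (h i) (h ((i + 1) mod n))) = 1"

text \<open>Winding fraction of the (finite) induced subgraph on W (empty sup taken as 0).\<close>
definition wf_fin :: "real set \<Rightarrow> (real \<Rightarrow> real \<Rightarrow> bool) \<Rightarrow> real" where
  "wf_fin W E = Sup (insert 0 {real k / real n | k n. \<exists>h. cyclic_hom n k W E h})"

definition wf :: "real set \<Rightarrow> (real \<Rightarrow> real \<Rightarrow> bool) \<Rightarrow> real" where
  "wf V E = Sup {wf_fin W E | W. W \<subseteq> V \<and> finite W}"

definition gamma :: "real set \<Rightarrow> (real \<Rightarrow> real \<Rightarrow> bool) \<Rightarrow> nat \<Rightarrow> real \<Rightarrow> real" where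
  "gamma V E m v = Sup {(\<Sum>i<m. cdist (w i) (w (Suc i))) | w.
      w 0 = v \<and> (\<forall>i<m. w (Suc i) \<in> out_nbhd E (w i))}"

definition fm :: "real set \<Rightarrow> (real \<Rightarrow> real \<Rightarrow> bool) \<Rightarrow> nat \<Rightarrow> real \<Rightarrow> real" where
  "fm V E m v = frac (v + gamma V E m v)"

text \<open>Topology of S^1 via the quotient map R \<rightarrow> R/Z: V is closed in S^1 iff its
  preimage is closed in R; g on V is continuous iff g \<circ> quotient is continuous on the preimage.\<close>
definition lift :: "real set \<Rightarrow> real set" where
  "lift V = {x. frac x \<in> V}"

definition closed_graph :: "real set \<Rightarrow> bool" where
  "closed_graph V \<longleftrightarrow> closed (lift V)"

definition continuous_graph :: "real set \<Rightarrow> (real \<Rightarrow> real \<Rightarrow> bool) \<Rightarrow> bool" where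
  "continuous_graph V E \<longleftrightarrow> (\<forall>m. continuous_on (lift V) (\<lambda>x. gamma V E m (frac x)))"

end

theory Submission
  imports Defs
begin

text \<open>On a cyclic graph the lifted map \<open>x \<mapsto> x + \<gamma>\<^sub>m(x)\<close> is monotone: a walk
  starting at \<open>u\<close> can be redirected through any vertex \<open>x\<close> lying clockwise before its
  first step, because the cyclic condition provides the edge from \<open>x\<close> onwards.
  Closedness of \<open>V\<close> puts \<open>f\<^sub>i(v)\<close>, a limit of walk endpoints, into \<open>V\<close>.
  Monotonicity then bounds \<open>\<gamma>\<^sub>i\<^sub>+\<^sub>j(v)\<close> from above by
  \<open>\<gamma>\<^sub>i(v) + \<gamma>\<^sub>j(f\<^sub>i(v))\<close>, and continuity of \<open>\<gamma>\<^sub>j\<close> at \<open>f\<^sub>i(v)\<close> gives the reverse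
  inequality by concatenating a nearly optimal \<open>i\<close>-walk with a nearly optimal \<open>j\<close>-walk.\<close>

lemma cdist_nonneg: "0 \<le> cdist a b"
  by (simp add: cdist_def)

lemma cdist_less_1: "cdist a b < 1"
  by (simp add: cdist_def frac_lt_1)

lemma cdist_self [simp]: "cdist a a = 0"
  by (simp add: cdist_def)

lemma cdist_add:
  assumes "cdist u y \<le> cdist u x"
  shows "cdist u y + cdist y x = cdist u x"
proof -
  have "x - y = (cdist u x - cdist u y) + of_int (\<lfloor>x - u\<rfloor> - \<lfloor>y - u\<rfloor>)"
    by (simp add: cdist_def frac_def)
  then have "frac (x - y) = cdist u x - cdist u y"
    using assms cdist_less_1[of u x] cdist_nonneg[of u y]
    by (simp add: frac_eq frac_add_of_int_right del: of_int_diff)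
  then show ?thesis
    by (simp add: cdist_def)
qed

lemma cdist_eq_0_imp_eq:
  assumes "cdist u x = 0" "u \<in> {0..<1}" "x \<in> {0..<1}"
  shows "x = u"
proof -
  obtain z where z: "x - u = of_int z"
    using assms(1) by (auto simp: cdist_def frac_eq_0_iff elim: Ints_cases)
  with assms(2,3) have "-1 < z" "z < 1"
    by (simp_all flip: of_int_less_iff)
  with z show ?thesis
    by simp
qed

lemma cdist_frac_le: "U \<le> X \<Longrightarrow> cdist (frac U) (frac X) \<le> X - U"
proof -
  assume "U \<le> X"
  have "frac X - frac U = (X - U) + of_int (\<lfloor>U\<rfloor> - \<lfloor>X\<rfloor>)"
    by (simp add: frac_def)
  then have "cdist (frac U) (frac X) = frac (X - U)"
    by (simp add: cdist_def frac_add_of_int_right del: of_int_diff)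
  then show ?thesis
    using \<open>U \<le> X\<close> by (simp add: frac_def)
qed

primrec walk :: "(real \<Rightarrow> real \<Rightarrow> bool) \<Rightarrow> nat \<Rightarrow> real \<Rightarrow> real \<Rightarrow> real \<Rightarrow> bool" where
  "walk E 0 v u L \<longleftrightarrow> u = v \<and> L = 0"
| "walk E (Suc m) v u L \<longleftrightarrow>
     (\<exists>y L'. y \<in> out_nbhd E v \<and> walk E m y u L' \<and> L = cdist v y + L')"

lemma walk_of_seq:
  assumes "\<forall>i<m. w (Suc i) \<in> out_nbhd E (w i)"
  shows "walk E m (w 0) (w m) (\<Sum>i<m. cdist (w i) (w (Suc i)))"
  using assms
proof (induction m arbitrary: w)
  case 0
  then show ?case by simp
next
  case (Suc m)
  have "walk E m ((w \<circ> Suc) 0) ((w \<circ> Suc) m) (\<Sum>i<m. cdist ((w \<circ> Suc) i) ((w \<circ> Suc) (Suc i)))"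
    using Suc by (intro Suc.IH) auto
  moreover have "w 1 \<in> out_nbhd E (w 0)"
    using Suc.prems by auto
  ultimately show ?case
    unfolding sum.lessThan_Suc_shift by auto
qed

lemma seq_of_walk:
  assumes "walk E m v u L"
  shows "\<exists>w. w 0 = v \<and> (\<forall>i<m. w (Suc i) \<in> out_nbhd E (w i)) \<and>
    L = (\<Sum>i<m. cdist (w i) (w (Suc i)))"
  using assms
proof (induction m arbitrary: v L)
  case 0
  then show ?case by auto
next
  case (Suc m)
  then obtain y L' where y: "y \<in> out_nbhd E v" "walk E m y u L'" "L = cdist v y + L'"
    by auto
  with Suc.IH obtain w where w: "w 0 = y" "\<forall>i<m. w (Suc i) \<in> out_nbhd E (w i)"
    "L' = (\<Sum>i<m. cdist (w i) (w (Suc i)))"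
    by blast
  have "\<forall>i<Suc m. case_nat v w (Suc i) \<in> out_nbhd E (case_nat v w i)"
    using w y by (auto simp: less_Suc_eq_0_disj)
  moreover have "L = (\<Sum>i<Suc m. cdist (case_nat v w i) (case_nat v w (Suc i)))"
    using w y by (simp add: sum.lessThan_Suc_shift del: sum.lessThan_Suc)
  ultimately show ?case
    using w(1) by (intro exI[of _ "case_nat v w"]) simp
qed

lemma gamma_eq_Sup_walk: "gamma V E m v = Sup {L. \<exists>u. walk E m v u L}"
proof -
  have "{(\<Sum>i<m. cdist (w i) (w (Suc i))) | w. w 0 = v \<and> (\<forall>i<m. w (Suc i) \<in> out_nbhd E (w i))}
      = {L. \<exists>u. walk E m v u L}"
    by (blast dest: walk_of_seq seq_of_walk)
  then show ?thesis
    by (simp add: gamma_def)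
qed

lemma walk_length_le: "walk E m v u L \<Longrightarrow> L \<le> real m"
proof (induction m arbitrary: v L)
  case 0
  then show ?case by simp
next
  case (Suc m)
  then obtain y L' where "walk E m y u L'" "L = cdist v y + L'"
    by auto
  then show ?case
    using Suc.IH[of y L'] cdist_less_1[of v y] by simp
qed

lemma walk_stay: "walk E m v v 0"
  by (induction m) (auto simp: out_nbhd_def intro: exI[of _ v])

lemma walk_le_gamma: "walk E m v u L \<Longrightarrow> L \<le> gamma V E m v"
  unfolding gamma_eq_Sup_walk
  by (rule cSup_upper) (auto intro!: bdd_aboveI[of _ "real m"] dest: walk_length_le)

lemma gamma_least: "(\<And>u L. walk E m v u L \<Longrightarrow> L \<le> c) \<Longrightarrow> gamma V E m v \<le> c"
  unfolding gamma_eq_Sup_walk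
  by (rule cSup_least) (auto intro: walk_stay)

lemma walk_approx_gamma:
  assumes "e > 0"
  obtains u L where "walk E m v u L" "gamma V E m v - e < L"
proof -
  have "\<not> gamma V E m v \<le> gamma V E m v - e"
    using assms by simp
  then show ?thesis
    by (meson gamma_least not_le that)
qed

lemma gamma_0 [simp]: "gamma V E 0 v = 0"
  using gamma_least[where c = 0 and m = 0] walk_le_gamma[OF walk_stay, where m = 0]
  by (simp add: order_antisym)

lemma gamma_le_gamma_Suc: "gamma V E m v \<le> gamma V E (Suc m) v"
proof (rule gamma_least)
  fix u L
  assume "walk E m v u L"
  then have "walk E (Suc m) v u (cdist v v + L)"
    by (auto simp: out_nbhd_def)
  then show "L \<le> gamma V E (Suc m) v"
    using walk_le_gamma by fastforce
qed

lemma walk_end: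
  assumes "digraph V E" "v \<in> V" "walk E m v u L"
  shows "u \<in> V \<and> frac (v + L) = u"
  using assms(2,3)
proof (induction m arbitrary: v L)
  case 0
  then show ?case
    using assms(1) by (auto simp: digraph_def frac_eq)
next
  case (Suc m)
  then obtain y L' where y: "y \<in> out_nbhd E v" "walk E m y u L'" "L = cdist v y + L'"
    by auto
  have "y \<in> V"
    using y(1) Suc.prems assms(1) by (auto simp: out_nbhd_def digraph_def)
  with Suc.IH y(2) have "u \<in> V" "frac (y + L') = u"
    by auto
  moreover have "v + L = (y + L') + of_int (- \<lfloor>y - v\<rfloor>)"
    using y(3) by (simp add: cdist_def frac_def)
  ultimately show ?case
    by (simp only: frac_add_of_int_right)
qed

lemma walk_append:
  "walk E (i + j) v z L \<longleftrightarrow> (\<exists>u L1 L2. walk E i v u L1 \<and> walk E j u z L2 \<and> L = L1 + L2)"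
proof (induction i arbitrary: v L)
  case 0
  then show ?case by auto
next
  case (Suc i)
  show ?case
  proof
    assume "walk E (Suc i + j) v z L"
    then obtain y L' where y: "y \<in> out_nbhd E v" "walk E (i + j) y z L'" "L = cdist v y + L'"
      by auto
    with Suc.IH obtain u L1 L2 where "walk E i y u L1" "walk E j u z L2" "L' = L1 + L2"
      by blast
    with y show "\<exists>u L1 L2. walk E (Suc i) v u L1 \<and> walk E j u z L2 \<and> L = L1 + L2"
      by (intro exI[of _ u] exI[of _ "cdist v y + L1"] exI[of _ L2]) auto
  next
    assume "\<exists>u L1 L2. walk E (Suc i) v u L1 \<and> walk E j u z L2 \<and> L = L1 + L2"
    then obtain u L1 L2 y L' where y: "y \<in> out_nbhd E v" "walk E i y u L'" "L1 = cdist v y + L'"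
      and "walk E j u z L2" "L = L1 + L2"
      by auto
    then have "walk E (i + j) y z (L' + L2)"
      using Suc.IH by blast
    moreover have "L = cdist v y + (L' + L2)"
      using y(3) \<open>L = L1 + L2\<close> by simp
    ultimately show "walk E (Suc i + j) v z L"
      using y(1) by auto
  qed
qed

lemma cyclic_graph_imp_digraph: "cyclic_graph V E \<Longrightarrow> digraph V E"
  by (simp add: cyclic_graph_def)

lemma cyclic_graph_edge_from_between:
  assumes "cyclic_graph V E" "v \<in> V" "u \<in> V" "w \<in> V" "E v u" "cbetween v w u"
  shows "E w u"
  using assms unfolding cyclic_graph_def by blast

lemma gamma_le_cdist_plus_gamma:
  assumes cyc: "cyclic_graph V E" and "u \<in> V" "x \<in> V"
  shows "gamma V E m u \<le> cdist u x + gamma V E m x"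
  using assms(2,3)
proof (induction m arbitrary: u x)
  case 0
  then show ?case by (simp add: cdist_nonneg)
next
  case (Suc m)
  have dg: "digraph V E"
    using cyc by (rule cyclic_graph_imp_digraph)
  show ?case
  proof (rule gamma_least)
    fix z L
    assume "walk E (Suc m) u z L"
    then obtain y L' where y: "y \<in> out_nbhd E u" "walk E m y z L'" "L = cdist u y + L'"
      by auto
    have yV: "y \<in> V"
      using y(1) Suc.prems dg by (auto simp: out_nbhd_def digraph_def)
    have L': "L' \<le> cdist y x + gamma V E m x"
      using walk_le_gamma[OF y(2), of V] Suc.IH[OF yV Suc.prems(2)] by linarith
    show "L \<le> cdist u x + gamma V E (Suc m) x"
    proof (cases "cdist u y \<le> cdist u x")
      case True
      then show ?thesis
        using cdist_add[OF True] y(3) L' gamma_le_gamma_Suc[of V E m x] by linarith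
    next
      case later: False
      show ?thesis
      proof (cases "cdist u x = 0")
        case True
        have "V \<subseteq> {0..<1}"
          using dg by (simp add: digraph_def)
        then have "x = u"
          using cdist_eq_0_imp_eq[OF True] Suc.prems by blast
        then show ?thesis
          using walk_le_gamma[OF \<open>walk E (Suc m) u z L\<close>] by simp
      next
        case False
        have "E u y"
          using y(1) later cdist_nonneg[of u x] by (auto simp: out_nbhd_def)
        moreover have "cbetween u x y"
          using False later cdist_nonneg[of u x] by (simp add: cbetween_def)
        ultimately have "E x y"
          using cyclic_graph_edge_from_between[OF cyc Suc.prems(1) yV Suc.prems(2)] by blast
        then have "walk E (Suc m) x z (cdist x y + L')"
          using y(2) by (auto simp: out_nbhd_def)
        then have "cdist x y + L' \<le> gamma V E (Suc m) x"
          by (rule walk_le_gamma)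
        moreover have "cdist u x + cdist x y = cdist u y"
          using later by (intro cdist_add) simp
        ultimately show ?thesis
          using y(3) by linarith
      qed
    qed
  qed
qed

lemma lifted_gamma_mono:
  assumes "cyclic_graph V E" "frac U \<in> V" "frac X \<in> V" "U \<le> X"
  shows "U + gamma V E m (frac U) \<le> X + gamma V E m (frac X)"
proof -
  have "gamma V E m (frac U) \<le> cdist (frac U) (frac X) + gamma V E m (frac X)"
    by (rule gamma_le_cdist_plus_gamma[OF assms(1-3)])
  also have "\<dots> \<le> (X - U) + gamma V E m (frac X)"
    using cdist_frac_le[OF assms(4)] by (rule add_right_mono)
  finally show ?thesis
    by simp
qed

lemma fm_in_vertices:
  assumes "digraph V E" "closed_graph V" "v \<in> V"
  shows "fm V E m v \<in> V"
proof -
  have "\<forall>e>0. \<exists>y\<in>lift V. dist y (v + gamma V E m v) < e"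
  proof (intro allI impI)
    fix e :: real
    assume "e > 0"
    then obtain u L where w: "walk E m v u L" "gamma V E m v - e < L"
      by (rule walk_approx_gamma)
    have "v + L \<in> lift V"
      using walk_end[OF assms(1,3) w(1)] by (simp add: lift_def)
    moreover have "dist (v + L) (v + gamma V E m v) < e"
      using w(2) walk_le_gamma[OF w(1), of V] by (simp add: dist_real_def)
    ultimately show "\<exists>y\<in>lift V. dist y (v + gamma V E m v) < e"
      by blast
  qed
  moreover have "closed (lift V)"
    using assms(2) by (simp add: closed_graph_def)
  ultimately have "v + gamma V E m v \<in> lift V"
    by (simp add: closed_approachable)
  then show ?thesis
    by (simp add: lift_def fm_def)
qed

lemma gamma_add_le:
  assumes cyc: "cyclic_graph V E" and "closed_graph V" "v \<in> V"
  shows "gamma V E (i + j) v \<le> gamma V E i v + gamma V E j (fm V E i v)"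
proof (rule gamma_least)
  note dg = cyclic_graph_imp_digraph[OF cyc]
  fix z L
  assume "walk E (i + j) v z L"
  then obtain u L1 L2 where w: "walk E i v u L1" "walk E j u z L2" "L = L1 + L2"
    using walk_append by blast
  have u: "u \<in> V" "frac (v + L1) = u"
    using walk_end[OF dg \<open>v \<in> V\<close> w(1)] by auto
  have "v + L1 + gamma V E j u \<le> v + gamma V E i v + gamma V E j (fm V E i v)"
    using lifted_gamma_mono[OF cyc, of "v + L1" "v + gamma V E i v" j] u
      fm_in_vertices[OF dg assms(2,3)] walk_le_gamma[OF w(1)]
    by (simp add: fm_def)
  then show "L \<le> gamma V E i v + gamma V E j (fm V E i v)"
    using walk_le_gamma[OF w(2), of V] w(3) by linarith
qed

lemma gamma_add_ge:
  assumes dg: "digraph V E" and "closed_graph V" "continuous_graph V E" "v \<in> V"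
  shows "gamma V E i v + gamma V E j (fm V E i v) \<le> gamma V E (i + j) v"
proof (rule field_le_epsilon)
  fix e :: real
  assume "0 < e"
  then have "e / 3 > 0"
    by simp
  define F where "F = v + gamma V E i v"
  have "F \<in> lift V"
    using fm_in_vertices[OF dg assms(2,4)] by (simp add: F_def fm_def lift_def)
  then obtain d where "d > 0" and d: "\<forall>x\<in>lift V. dist x F < d \<longrightarrow>
      dist (gamma V E j (frac x)) (gamma V E j (frac F)) < e / 3"
    using assms(3) \<open>e / 3 > 0\<close> unfolding continuous_graph_def continuous_on_iff by blast
  then have "min d (e / 3) > 0"
    using \<open>e / 3 > 0\<close> by simp
  then obtain u L1 where w1: "walk E i v u L1" "gamma V E i v - min d (e / 3) < L1"
    by (rule walk_approx_gamma)
  have u: "u \<in> V" "frac (v + L1) = u"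
    using walk_end[OF dg \<open>v \<in> V\<close> w1(1)] by auto
  have "dist (v + L1) F < d"
    using w1(2) walk_le_gamma[OF w1(1), of V] by (simp add: F_def dist_real_def)
  moreover have "v + L1 \<in> lift V"
    using u by (simp add: lift_def)
  ultimately have "dist (gamma V E j u) (gamma V E j (frac F)) < e / 3"
    using d u(2) by blast
  then have "gamma V E j (frac F) < gamma V E j u + e / 3"
    unfolding dist_real_def abs_less_iff by linarith
  moreover obtain z L2 where w2: "walk E j u z L2" "gamma V E j u - e / 3 < L2"
    using walk_approx_gamma \<open>e / 3 > 0\<close> by blast
  moreover have "walk E (i + j) v z (L1 + L2)"
    using walk_append w1(1) w2(1) by blast
  then have "L1 + L2 \<le> gamma V E (i + j) v"
    by (rule walk_le_gamma)
  ultimately show "gamma V E i v + gamma V E j (fm V E i v) \<le> gamma V E (i + j) v + e"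
    using w1(2) by (simp add: F_def fm_def)
qed

lemma fm_add:
  assumes "gamma V E (i + j) v = gamma V E i v + gamma V E j (fm V E i v)"
  shows "fm V E (i + j) v = fm V E j (fm V E i v)"
proof -
  define a where "a = v + gamma V E i v"
  define g where "g = gamma V E j (frac a)"
  have shift: "frac a + g = (a + g) + of_int (- \<lfloor>a\<rfloor>)"
    by (simp add: frac_def)
  have "fm V E j (fm V E i v) = frac (frac a + g)"
    by (simp add: fm_def a_def g_def)
  also have "\<dots> = frac (a + g)"
    by (simp only: shift frac_add_of_int_right)
  also have "\<dots> = fm V E (i + j) v"
    using assms by (simp add: fm_def a_def g_def add.assoc)
  finally show ?thesis ..
qed

theorem mainTheorem10:
  fixes V :: "real set" and E :: "real \<Rightarrow> real \<Rightarrow> bool" and p q :: nat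
  assumes "cyclic_graph V E"
    and "closed_graph V"
    and "continuous_graph V E"
    and "q > 0"
    and "wf V E = real p / real q"
  shows "\<forall>v\<in>V. \<forall>i j. fm V E i v \<in> V
           \<and> gamma V E (i + j) v = gamma V E i v + gamma V E j (fm V E i v)
           \<and> fm V E (i + j) v = fm V E j (fm V E i v)"
proof (intro ballI allI conjI)
  fix v i j
  assume "v \<in> V"
  note dg = cyclic_graph_imp_digraph[OF assms(1)]
  show "fm V E i v \<in> V"
    using fm_in_vertices[OF dg assms(2) \<open>v \<in> V\<close>] .
  show additive: "gamma V E (i + j) v = gamma V E i v + gamma V E j (fm V E i v)"
    using gamma_add_le[OF assms(1,2) \<open>v \<in> V\<close>] gamma_add_ge[OF dg assms(2,3) \<open>v \<in> V\<close>]
    by (rule antisym)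
  show "fm V E (i + j) v = fm V E j (fm V E i v)"
    using fm_add[OF additive] .
qed

end
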